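(* Let $\mathbb{K}$ be a field and let $\mathcal{L}=\{L_1,\ldots,L_d\}$ be a configuration of $d$ mutually distinct lines in $\mathbb{P}^2(\mathbb{K})$, with set of singular points $\{P_1,\ldots,P_s\}$, $s\ge 2$ (points lying on at least two lines of $\mathcal{L}$), where $P_i$ has multiplicity $m_i$ (the number of lines of $\mathcal{L}$ through $P_i$), ordered so that $m_1\ge m_2\ge\cdots\ge m_s$. (a) If $P_1$ and $P_2$ do not lie on a common line of $\mathcal{L}$, then $m_1m_2+2\le s$. (b) If $P_1$ and $P_2$ lie on a common line of $\mathcal{L}$, then $(m_1-1)(m_2-1)+2\le s$. *)

theory Defs
  imports Main
begin

text \<open>The projective plane P^2(K) over a field K: a point is the class of a nonzero
  vector of K^3 under nonzero scalar multiples; a line is the set of points whose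
  representatives satisfy a linear equation a . x = 0 with a nonzero.\<close>

type_synonym 'a vec3 = "'a \<times> 'a \<times> 'a"

definition smul3 :: "'a::field \<Rightarrow> 'a vec3 \<Rightarrow> 'a vec3" where
  "smul3 c v = (c * fst v, c * fst (snd v), c * snd (snd v))"

definition dot3 :: "'a::field vec3 \<Rightarrow> 'a vec3 \<Rightarrow> 'a" where
  "dot3 a v = fst a * fst v + fst (snd a) * fst (snd v) + snd (snd a) * snd (snd v)"

definition proj_pt :: "'a::field vec3 \<Rightarrow> 'a vec3 set" where
  "proj_pt v = {w. \<exists>c. c \<noteq> 0 \<and> w = smul3 c v}"

definition proj_points :: "'a::field vec3 set set" where
  "proj_points = proj_pt ` {v. v \<noteq> (0,0,0)}"

definition proj_line :: "'a::field vec3 \<Rightarrow> 'a vec3 set set" where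
  "proj_line a = {proj_pt v | v. v \<noteq> (0,0,0) \<and> dot3 a v = 0}"

definition proj_lines :: "'a::field vec3 set set set" where
  "proj_lines = proj_line ` {a. a \<noteq> (0,0,0)}"

definition mult :: "'a vec3 set set set \<Rightarrow> 'a vec3 set \<Rightarrow> nat" where
  "mult Ls P = card {L \<in> Ls. P \<in> L}"

definition sing_points :: "'a::field vec3 set set set \<Rightarrow> 'a vec3 set set" where
  "sing_points Ls = {P \<in> proj_points. mult Ls P \<ge> 2}"

end

theory Submission
  imports Defs
begin

text \<open>Two distinct lines of the projective plane meet in exactly one point. Hence a line
  through \<open>P\<^sub>1\<close> missing \<open>P\<^sub>2\<close> and a line through \<open>P\<^sub>2\<close> missing \<open>P\<^sub>1\<close> meet in a singular point
  other than \<open>P\<^sub>1, P\<^sub>2\<close>, and different pairs of such lines meet in different points, since two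
  lines through \<open>P\<^sub>1\<close> already meet at \<open>P\<^sub>1\<close>. If no line contains both points there are
  \<open>m\<^sub>1 m\<^sub>2\<close> such pairs; otherwise, discarding the line \<open>P\<^sub>1P\<^sub>2\<close>, there are \<open>(m\<^sub>1-1)(m\<^sub>2-1)\<close>.\<close>

definition cross3 :: "'a::field vec3 \<Rightarrow> 'a vec3 \<Rightarrow> 'a vec3" where
  "cross3 v w = (fst (snd v) * snd (snd w) - snd (snd v) * fst (snd w),
                 snd (snd v) * fst w - fst v * snd (snd w),
                 fst v * fst (snd w) - fst (snd v) * fst w)"

lemma dot3_cross3_left: "dot3 v (cross3 v w) = (0::'a::field)"
  by (simp add: cross3_def dot3_def algebra_simps)

lemma dot3_cross3_right: "dot3 w (cross3 v w) = (0::'a::field)"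
  by (simp add: cross3_def dot3_def algebra_simps)

lemma cross3_cross3:
  fixes a v w :: "'a::field vec3"
  shows "cross3 a (cross3 v w) =
    (dot3 a w * fst v - dot3 a v * fst w,
     dot3 a w * fst (snd v) - dot3 a v * fst (snd w),
     dot3 a w * snd (snd v) - dot3 a v * snd (snd w))"
  by (simp add: cross3_def dot3_def algebra_simps)

lemma cross3_commute_zero: "cross3 v w = (0,0,0) \<longleftrightarrow> cross3 w (v::'a::field vec3) = (0,0,0)"
  by (auto simp: cross3_def algebra_simps)

lemma cross3_eq_zero_imp_smul3:
  fixes v w :: "'a::field vec3"
  assumes "cross3 v w = (0,0,0)" and "v \<noteq> (0,0,0)"
  shows "\<exists>c. w = smul3 c v"
proof -
  obtain v1 v2 v3 w1 w2 w3 where v: "v = (v1,v2,v3)" and w: "w = (w1,w2,w3)"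
    by (cases v, cases w) auto
  have e: "v2*w3 = v3*w2" "v3*w1 = v1*w3" "v1*w2 = v2*w1"
    using assms(1) by (auto simp: cross3_def v w)
  consider "v1 \<noteq> 0" | "v1 = 0" "v2 \<noteq> 0" | "v1 = 0" "v2 = 0" "v3 \<noteq> 0"
    using assms(2) v by auto
  then show ?thesis
  proof cases
    case 1
    with e show ?thesis by (intro exI[of _ "w1/v1"]) (auto simp: smul3_def v w field_simps)
  next
    case 2
    with e show ?thesis by (intro exI[of _ "w2/v2"]) (auto simp: smul3_def v w field_simps)
  next
    case 3
    with e show ?thesis by (intro exI[of _ "w3/v3"]) (auto simp: smul3_def v w field_simps)
  qed
qed

lemma smul3_smul3: "smul3 d (smul3 c v) = smul3 (d * c) (v::'a::field vec3)"
  by (simp add: smul3_def)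

lemma smul3_eq_zero_iff: "smul3 c v = (0,0,0) \<longleftrightarrow> c = 0 \<or> v = ((0,0,0)::'a::field vec3)"
  by (cases v) (auto simp: smul3_def)

lemma dot3_smul3_left: "dot3 (smul3 c a) v = c * dot3 a (v::'a::field vec3)"
  by (simp add: smul3_def dot3_def algebra_simps)

lemma dot3_smul3_right: "dot3 a (smul3 c v) = c * dot3 a (v::'a::field vec3)"
  by (simp add: smul3_def dot3_def algebra_simps)

lemma proj_pt_refl: "v \<in> proj_pt (v::'a::field vec3)"
  unfolding proj_pt_def by (intro CollectI exI[of _ 1]) (simp add: smul3_def)

lemma proj_pt_smul3:
  assumes "c \<noteq> 0"
  shows "proj_pt (smul3 c v) = proj_pt (v::'a::field vec3)"
proof -
  have "smul3 d (smul3 c v) = smul3 (d * c) v" "smul3 d v = smul3 (d / c) (smul3 c v)" for d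
    using assms by (simp_all add: smul3_smul3)
  then show ?thesis
    using assms unfolding proj_pt_def by (metis divide_eq_0_iff mult_eq_0_iff)
qed

lemma proj_line_smul3: "c \<noteq> 0 \<Longrightarrow> proj_line (smul3 c a) = proj_line (a::'a::field vec3)"
  by (simp add: proj_line_def dot3_smul3_left)

lemma dot3_eq_zero_if_proj_pt_in_line:
  assumes "proj_pt v \<in> proj_line a"
  shows "dot3 a (v::'a::field vec3) = 0"
proof -
  obtain w where w: "proj_pt v = proj_pt w" "dot3 a w = 0"
    using assms by (auto simp: proj_line_def)
  then obtain c where "v = smul3 c w"
    using proj_pt_refl[of v] by (auto simp: proj_pt_def)
  with w show ?thesis by (simp add: dot3_smul3_right)
qed

lemma proj_line_eq_if_cross3_eq_zero:
  assumes "a \<noteq> (0,0,0)" "b \<noteq> (0,0,0)" "cross3 a b = (0,0,0)"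
  shows "proj_line b = proj_line (a::'a::field vec3)"
proof -
  obtain c where "b = smul3 c a" using cross3_eq_zero_imp_smul3 assms by blast
  with assms show ?thesis by (metis proj_line_smul3 smul3_eq_zero_iff)
qed

lemma proj_lines_meet:
  assumes "L \<in> proj_lines" "M \<in> (proj_lines :: 'a::field vec3 set set set)" "L \<noteq> M"
  shows "\<exists>P\<in>proj_points. P \<in> L \<and> P \<in> M"
proof -
  obtain a b where ab: "a \<noteq> (0,0,0)" "L = proj_line a" "b \<noteq> (0,0,0)" "M = proj_line b"
    using assms(1,2) unfolding proj_lines_def by blast
  have "cross3 a b \<noteq> (0,0,0)"
    using proj_line_eq_if_cross3_eq_zero[of a b] ab assms(3) by auto
  moreover have "dot3 a (cross3 a b) = 0" "dot3 b (cross3 a b) = 0"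
    by (simp_all add: dot3_cross3_left dot3_cross3_right)
  ultimately show ?thesis
    using ab unfolding proj_points_def proj_line_def by blast
qed

lemma proj_lines_meet_unique:
  assumes "L \<in> proj_lines" "M \<in> (proj_lines :: 'a::field vec3 set set set)" "L \<noteq> M"
    and "P \<in> L" "P \<in> M" "Q \<in> L" "Q \<in> M"
  shows "P = Q"
proof (rule ccontr)
  assume "P \<noteq> Q"
  obtain a b where ab: "a \<noteq> (0,0,0)" "L = proj_line a" "b \<noteq> (0,0,0)" "M = proj_line b"
    using assms(1,2) unfolding proj_lines_def by blast
  obtain v w where vw: "v \<noteq> (0,0,0)" "P = proj_pt v" "w \<noteq> (0,0,0)" "Q = proj_pt w"
    using assms(4,6) ab unfolding proj_line_def by blast
  have "cross3 v w \<noteq> (0,0,0)"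
  proof
    assume "cross3 v w = (0,0,0)"
    then obtain c where "w = smul3 c v" using cross3_eq_zero_imp_smul3 vw(1) by blast
    with vw \<open>P \<noteq> Q\<close> show False by (metis proj_pt_smul3 smul3_eq_zero_iff)
  qed
  \<comment> \<open>both coefficient vectors are then proportional to \<open>v \<times> w\<close>, the line through \<open>P\<close> and \<open>Q\<close>\<close>
  moreover have "dot3 a v = 0" "dot3 a w = 0" "dot3 b v = 0" "dot3 b w = 0"
    using assms(4-7) ab vw dot3_eq_zero_if_proj_pt_in_line by metis+
  then have "cross3 (cross3 v w) a = (0,0,0)" "cross3 (cross3 v w) b = (0,0,0)"
    by (simp_all add: cross3_commute_zero[of _ a] cross3_commute_zero[of _ b]
                      cross3_cross3)
  ultimately have "L = proj_line (cross3 v w)" "M = proj_line (cross3 v w)"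
    using ab proj_line_eq_if_cross3_eq_zero by metis+
  with assms(3) show False by simp
qed

definition meet :: "'a::field vec3 set set \<Rightarrow> 'a vec3 set set \<Rightarrow> 'a vec3 set" where
  "meet L M = (SOME P. P \<in> proj_points \<and> P \<in> L \<and> P \<in> M)"

lemma meet_in_lines:
  assumes "L \<in> proj_lines" "M \<in> (proj_lines :: 'a::field vec3 set set set)" "L \<noteq> M"
  shows "meet L M \<in> proj_points" "meet L M \<in> L" "meet L M \<in> M"
proof -
  have "\<exists>P. P \<in> proj_points \<and> P \<in> L \<and> P \<in> M"
    using proj_lines_meet[OF assms] by blast
  from someI_ex[OF this] show "meet L M \<in> proj_points" "meet L M \<in> L" "meet L M \<in> M"
    unfolding meet_def by blast+
qed

lemma card_lines_through_le_sing_points: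
  fixes Ls :: "'a::field vec3 set set set"
  assumes "finite Ls" "Ls \<subseteq> proj_lines" "finite (sing_points Ls)"
    and "As \<subseteq> {L \<in> Ls. P \<in> L \<and> Q \<notin> L}" and "Bs \<subseteq> {L \<in> Ls. Q \<in> L \<and> P \<notin> L}"
  shows "card As * card Bs \<le> card (sing_points Ls - {P, Q})"
proof -
  have distinct: "A \<noteq> B" if "A \<in> As" "B \<in> Bs" for A B
    using that assms(4,5) by blast
  have lines: "A \<in> proj_lines" "B \<in> proj_lines" if "A \<in> As" "B \<in> Bs" for A B
    using that assms(2,4,5) by blast+
  have meet: "meet A B \<in> proj_points" "meet A B \<in> A" "meet A B \<in> B"
    if "A \<in> As" "B \<in> Bs" for A B
    using meet_in_lines[OF lines[OF that] distinct[OF that]] by blast+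
  define f :: "'a vec3 set set \<times> 'a vec3 set set \<Rightarrow> 'a vec3 set"
    where "f = (\<lambda>(A, B). meet A B)"
  have "inj_on f (As \<times> Bs)"
  proof (rule inj_onI, clarsimp simp: f_def)
    fix A B A' B'
    assume in_sets: "A \<in> As" "B \<in> Bs" "A' \<in> As" "B' \<in> Bs" and eq: "meet A B = meet A' B'"
    have through: "P \<in> A" "P \<in> A'" "Q \<in> B" "Q \<in> B'" "P \<notin> B" "Q \<notin> A"
      using in_sets assms(4,5) by blast+
    have "meet A B \<in> A" "meet A B \<in> B" "meet A B \<in> A'" "meet A B \<in> B'"
      using meet(2,3)[OF in_sets(1,2)] meet(2,3)[OF in_sets(3,4)] eq by simp_all
    with through have "A = A'" "B = B'"
      using proj_lines_meet_unique[OF lines(1)[OF in_sets(1,2)] lines(1)[OF in_sets(3,4)]]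
        proj_lines_meet_unique[OF lines(2)[OF in_sets(1,2)] lines(2)[OF in_sets(3,4)]]
      by blast+
    then show "A = A' \<and> B = B'" ..
  qed
  moreover have "f ` (As \<times> Bs) \<subseteq> sing_points Ls - {P, Q}"
  proof (clarsimp simp: f_def)
    fix A B assume in_sets: "A \<in> As" "B \<in> Bs"
    have "{A, B} \<subseteq> {L \<in> Ls. meet A B \<in> L}"
      using meet(2,3)[OF in_sets] in_sets assms(4,5) by blast
    then have "card {A, B} \<le> mult Ls (meet A B)"
      unfolding mult_def using assms(1) by (intro card_mono) auto
    then have "meet A B \<in> sing_points Ls"
      using meet(1)[OF in_sets] distinct[OF in_sets] by (simp add: sing_points_def)
    moreover have "meet A B \<noteq> P" "meet A B \<noteq> Q"
      using meet(2,3)[OF in_sets] in_sets assms(4,5) by blast+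
    ultimately show "meet A B \<in> sing_points Ls \<and> meet A B \<noteq> P \<and> meet A B \<noteq> Q"
      by blast
  qed
  ultimately have "card (As \<times> Bs) \<le> card (sing_points Ls - {P, Q})"
    using assms(3) by (intro card_inj_on_le) auto
  then show ?thesis by (simp add: card_cartesian_product)
qed

theorem lemma3:
  fixes Ls :: "('a::field) vec3 set set set" and P1 P2 :: "'a vec3 set"
  assumes "finite Ls" and "Ls \<subseteq> proj_lines"
    and "card (sing_points Ls) \<ge> 2"
    and "P1 \<in> sing_points Ls" and "P2 \<in> sing_points Ls" and "P1 \<noteq> P2"
    and "\<forall>Q\<in>sing_points Ls. mult Ls Q \<le> mult Ls P1"
    and "\<forall>Q\<in>sing_points Ls - {P1}. mult Ls Q \<le> mult Ls P2"
  shows "(\<not> (\<exists>L\<in>Ls. P1 \<in> L \<and> P2 \<in> L) \<longrightarrow>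
            mult Ls P1 * mult Ls P2 + 2 \<le> card (sing_points Ls))
       \<and> ((\<exists>L\<in>Ls. P1 \<in> L \<and> P2 \<in> L) \<longrightarrow>
            (mult Ls P1 - 1) * (mult Ls P2 - 1) + 2 \<le> card (sing_points Ls))"
proof -
  have fin: "finite (sing_points Ls)" using assms(3) card.infinite by fastforce
  have card_rest: "card (sing_points Ls - {P1, P2}) + 2 = card (sing_points Ls)"
    using fin assms(3-6) by (simp add: card_Diff_subset)
  note count = card_lines_through_le_sing_points[OF assms(1,2) fin, of _ P1 P2]
  show ?thesis
  proof (intro conjI impI)
    assume "\<not> (\<exists>L\<in>Ls. P1 \<in> L \<and> P2 \<in> L)"
    then have "mult Ls P1 * mult Ls P2 \<le> card (sing_points Ls - {P1, P2})"
      unfolding mult_def by (intro count) auto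
    with card_rest show "mult Ls P1 * mult Ls P2 + 2 \<le> card (sing_points Ls)" by linarith
  next
    assume "\<exists>L\<in>Ls. P1 \<in> L \<and> P2 \<in> L"
    then obtain L0 where L0: "L0 \<in> Ls" "P1 \<in> L0" "P2 \<in> L0" by blast
    have "L = L0" if "L \<in> Ls" "P1 \<in> L" "P2 \<in> L" for L
      using proj_lines_meet_unique[of L L0 P1 P2] that L0 assms(2,6) by blast
    then have "card ({L \<in> Ls. P1 \<in> L} - {L0}) * card ({L \<in> Ls. P2 \<in> L} - {L0})
                 \<le> card (sing_points Ls - {P1, P2})"
      by (intro count) auto
    with L0 assms(1) card_rest
    show "(mult Ls P1 - 1) * (mult Ls P2 - 1) + 2 \<le> card (sing_points Ls)"
      by (simp add: mult_def card_Diff_singleton)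
  qed
qed

end
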